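(* Let $M$ agents have finite-horizon MDPs $\mathcal{M}^i=(\mathcal{S},\mathcal{A},H,\{P^i_h\},\{r^i_h\})$ with common finite state and action spaces, satisfying: there exist kernels $P^c_h$, $P^{\mathrm{ind},i}_h$ and $\varepsilon_{\mathsf p}\in[0,1)$ such that $P^i_h(s'|s,a)=(1-\varepsilon_{\mathsf p})P^c_h(s'|s,a)+\varepsilon_{\mathsf p}P^{\mathrm{ind},i}_h(s'|s,a)$ for all $i,h,s,a,s'$. Then for any policy $\pi$, any initial state $s_0$, any $(s,a,h)\in\mathcal{S}\times\mathcal{A}\times[H]$ and any $i,j\in[M]$, $$|d^{i,\pi}_{s_0,h}(s,a)-d^{j,\pi}_{s_0,h}(s,a)|\le\varepsilon_{\mathsf p}H.$$
   Context: $d^{i,\pi}_{s_0,h}(s,a)$ denotes the probability that $(s_h,a_h)=(s,a)$ when following $\pi$ in $\mathcal{M}^i$ starting from $s_1=s_0$. *)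

theory Defs
  imports Complex_Main
begin

text \<open>Steps are indexed by h = 1..H.  A transition kernel is
  P :: nat => 's => 'a => 's => real, where P h s a s' is P_h(s'|s,a).
  A (Markov, possibly non-stationary, randomized) policy is
  pol :: nat => 's => 'a => real, where pol h s a is pi_h(a|s).\<close>

definition stoch_kernel :: "nat \<Rightarrow> (nat \<Rightarrow> 's::finite \<Rightarrow> 'a::finite \<Rightarrow> 's \<Rightarrow> real) \<Rightarrow> bool" where
  "stoch_kernel H P \<longleftrightarrow>
     (\<forall>h\<in>{1..H}. \<forall>s a. (\<forall>s'. P h s a s' \<ge> 0) \<and> (\<Sum>s'\<in>UNIV. P h s a s') = 1)"

definition stoch_policy :: "nat \<Rightarrow> (nat \<Rightarrow> 's::finite \<Rightarrow> 'a::finite \<Rightarrow> real) \<Rightarrow> bool" where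
  "stoch_policy H pol \<longleftrightarrow>
     (\<forall>h\<in>{1..H}. \<forall>s. (\<forall>a. pol h s a \<ge> 0) \<and> (\<Sum>a\<in>UNIV. pol h s a) = 1)"

text \<open>occ P pol s0 h s a = Pr[(s_h, a_h) = (s, a)] when following pol in the
  MDP with kernel P starting from s_1 = s0 (meaningful for h >= 1).\<close>

fun occ :: "(nat \<Rightarrow> 's::finite \<Rightarrow> 'a::finite \<Rightarrow> 's \<Rightarrow> real) \<Rightarrow> (nat \<Rightarrow> 's \<Rightarrow> 'a \<Rightarrow> real)
            \<Rightarrow> 's \<Rightarrow> nat \<Rightarrow> 's \<Rightarrow> 'a \<Rightarrow> real" where
  "occ P pol s0 0 s a = 0"
| "occ P pol s0 (Suc 0) s a = (if s = s0 then pol 1 s a else 0)"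
| "occ P pol s0 (Suc (Suc n)) s a =
     (\<Sum>s'\<in>UNIV. \<Sum>a'\<in>UNIV. occ P pol s0 (Suc n) s' a' * P (Suc n) s' a' s) * pol (Suc (Suc n)) s a"

end

theory Submission
  imports Defs
begin

text \<open>A simulation-lemma argument. Write \<open>E\<^sub>Q,\<^sub>n f\<close> for the expectation of a test function
  \<open>f\<close> under the step-\<open>n\<close> occupancy measure of kernel \<open>Q\<close>. One step of the recursion for
  \<open>occ\<close> turns \<open>E\<^sub>Q,\<^sub>n\<^sub>+\<^sub>1 f\<close> into \<open>E\<^sub>Q,\<^sub>n G\<^sub>Q\<close>, where \<open>G\<^sub>Q\<close> averages \<open>f\<close> over the next
  state and action and again takes values in [0,1]. Hence
  \<open>E\<^sub>1,\<^sub>n\<^sub>+\<^sub>1 f - E\<^sub>2,\<^sub>n\<^sub>+\<^sub>1 f = (E\<^sub>1,\<^sub>n G\<^sub>1 - E\<^sub>2,\<^sub>n G\<^sub>1) + E\<^sub>2,\<^sub>n (G\<^sub>1 - G\<^sub>2)\<close>; the first term is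
  handled by induction and the second is at most the total-variation distance of the
  kernels, which for the two mixtures \<open>(1 - \<epsilon>) P\<^sup>c + \<epsilon> P\<^sup>i\<^sup>n\<^sup>d\<^sup>,\<^sup>i\<close> is at most \<open>\<epsilon>\<close>.
  The error thus grows by \<open>\<epsilon>\<close> per step, and testing with the indicator of \<open>(s, a)\<close> gives
  the claim.\<close>

lemma sum_weighted_unit_interval:
  fixes w g :: "'x::finite \<Rightarrow> real"
  assumes "\<And>x. 0 \<le> w x" and "(\<Sum>x\<in>UNIV. w x) = 1" and "\<And>x. 0 \<le> g x \<and> g x \<le> 1"
  shows "0 \<le> (\<Sum>x\<in>UNIV. w x * g x) \<and> (\<Sum>x\<in>UNIV. w x * g x) \<le> 1"
proof
  show "0 \<le> (\<Sum>x\<in>UNIV. w x * g x)" using assms by (simp add: sum_nonneg)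
  have "(\<Sum>x\<in>UNIV. w x * g x) \<le> (\<Sum>x\<in>UNIV. w x)"
    by (rule sum_mono) (use assms in \<open>simp add: mult_left_le\<close>)
  then show "(\<Sum>x\<in>UNIV. w x * g x) \<le> 1" using assms by simp
qed

lemma mixture_test_diff_le:
  fixes c u v g :: "'x::finite \<Rightarrow> real"
  assumes "0 \<le> e"
    and "\<And>x. 0 \<le> u x" and "(\<Sum>x\<in>UNIV. u x) = 1"
    and "\<And>x. 0 \<le> v x" and "(\<Sum>x\<in>UNIV. v x) = 1"
    and "\<And>x. 0 \<le> g x \<and> g x \<le> 1"
  shows "\<bar>\<Sum>x\<in>UNIV. (((1 - e) * c x + e * u x) - ((1 - e) * c x + e * v x)) * g x\<bar> \<le> e"
proof -
  have "(\<Sum>x\<in>UNIV. (((1 - e) * c x + e * u x) - ((1 - e) * c x + e * v x)) * g x)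
      = e * ((\<Sum>x\<in>UNIV. u x * g x) - (\<Sum>x\<in>UNIV. v x * g x))"
    by (simp add: algebra_simps sum_distrib_left sum_subtractf)
  moreover have "\<bar>(\<Sum>x\<in>UNIV. u x * g x) - (\<Sum>x\<in>UNIV. v x * g x)\<bar> \<le> 1"
    using sum_weighted_unit_interval[of u g] sum_weighted_unit_interval[of v g] assms by auto
  ultimately show ?thesis
    using \<open>0 \<le> e\<close> by (simp add: abs_mult mult_left_le)
qed

lemma stoch_kernel_mixture:
  assumes "0 \<le> e" and "e \<le> 1" and "stoch_kernel H Pc" and "stoch_kernel H Pu"
    and "\<And>h s a s'. h \<in> {1..H} \<Longrightarrow> Q h s a s' = (1 - e) * Pc h s a s' + e * Pu h s a s'"
  shows "stoch_kernel H Q"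
  unfolding stoch_kernel_def
proof (intro ballI allI conjI)
  fix h s a s' assume h: "h \<in> {1..H}"
  have "0 \<le> Pc h s a s'" and "0 \<le> Pu h s a s'"
    using assms(3,4) h unfolding stoch_kernel_def by auto
  then show "0 \<le> Q h s a s'" using assms(1,2,5) h by simp
next
  fix h s a assume h: "h \<in> {1..H}"
  have "(\<Sum>s'\<in>UNIV. Pc h s a s') = 1" and "(\<Sum>s'\<in>UNIV. Pu h s a s') = 1"
    using assms(3,4) h unfolding stoch_kernel_def by auto
  then show "(\<Sum>s'\<in>UNIV. Q h s a s') = 1"
    using assms(5) h by (simp add: sum.distrib sum_distrib_left[symmetric])
qed

definition occ_expect ::
    "(nat \<Rightarrow> 's::finite \<Rightarrow> 'a::finite \<Rightarrow> 's \<Rightarrow> real) \<Rightarrow> (nat \<Rightarrow> 's \<Rightarrow> 'a \<Rightarrow> real)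
     \<Rightarrow> 's \<Rightarrow> nat \<Rightarrow> ('s \<Rightarrow> 'a \<Rightarrow> real) \<Rightarrow> real" where
  "occ_expect Q pol s0 n f = (\<Sum>s\<in>UNIV. \<Sum>a\<in>UNIV. occ Q pol s0 n s a * f s a)"

lemma occ_expect_diff:
  "occ_expect Q pol s0 n f - occ_expect Q pol s0 n g = occ_expect Q pol s0 n (\<lambda>s a. f s a - g s a)"
  by (simp add: occ_expect_def right_diff_distrib sum_subtractf)

lemma occ_expect_indicator:
  "occ_expect Q pol s0 n (\<lambda>x y. if x = s \<and> y = a then 1 else 0) = occ Q pol s0 n s a"
proof -
  have "(\<Sum>y\<in>UNIV. occ Q pol s0 n x y * (if x = s \<and> y = a then 1 else 0))
      = (if x = s then occ Q pol s0 n s a else 0)" for x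
    by (cases "x = s") (simp_all add: if_distrib[of "\<lambda>t. _ * t"] cong: if_cong)
  then show ?thesis by (simp add: occ_expect_def)
qed

lemma occ_expect_Suc_Suc:
  "occ_expect Q pol s0 (Suc (Suc m)) f =
   occ_expect Q pol s0 (Suc m)
     (\<lambda>s' a'. \<Sum>s\<in>UNIV. Q (Suc m) s' a' s * (\<Sum>a\<in>UNIV. pol (Suc (Suc m)) s a * f s a))"
proof -
  define g where "g s = (\<Sum>a\<in>UNIV. pol (Suc (Suc m)) s a * f s a)" for s
  have "occ_expect Q pol s0 (Suc (Suc m)) f =
      (\<Sum>s\<in>UNIV. (\<Sum>s'\<in>UNIV. \<Sum>a'\<in>UNIV. occ Q pol s0 (Suc m) s' a' * Q (Suc m) s' a' s) * g s)"
    by (simp add: occ_expect_def g_def sum_distrib_left mult.assoc)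
  also have "\<dots> = (\<Sum>s\<in>UNIV. \<Sum>s'\<in>UNIV. \<Sum>a'\<in>UNIV. occ Q pol s0 (Suc m) s' a' * (Q (Suc m) s' a' s * g s))"
    by (simp add: sum_distrib_right mult.assoc)
  also have "\<dots> = (\<Sum>s'\<in>UNIV. \<Sum>a'\<in>UNIV. \<Sum>s\<in>UNIV. occ Q pol s0 (Suc m) s' a' * (Q (Suc m) s' a' s * g s))"
    by (subst sum.swap) (rule sum.cong[OF refl], rule sum.swap)
  also have "\<dots> = occ_expect Q pol s0 (Suc m) (\<lambda>s' a'. \<Sum>s\<in>UNIV. Q (Suc m) s' a' s * g s)"
    by (simp add: occ_expect_def sum_distrib_left)
  finally show ?thesis unfolding g_def .
qed

lemma occ_nonneg:
  assumes "stoch_kernel H Q" and "stoch_policy H pol" and "Suc m \<le> H"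
  shows "0 \<le> occ Q pol s0 (Suc m) s a"
  using assms(3)
proof (induction m arbitrary: s a)
  case 0
  then show ?case using assms(2) by (simp add: stoch_policy_def)
next
  case (Suc m)
  have "0 \<le> Q (Suc m) s' a' s" and "0 \<le> pol (Suc (Suc m)) s a" for s' a'
    using assms(1,2) Suc.prems by (simp_all add: stoch_kernel_def stoch_policy_def)
  with Suc show ?case by (auto intro!: sum_nonneg mult_nonneg_nonneg)
qed

lemma occ_expect_one:
  assumes "stoch_kernel H Q" and "stoch_policy H pol" and "Suc m \<le> H"
  shows "occ_expect Q pol s0 (Suc m) (\<lambda>_ _. 1) = 1"
  using assms(3)
proof (induction m)
  case 0
  have "(\<Sum>a\<in>UNIV. occ Q pol s0 (Suc 0) s a) = (if s = s0 then \<Sum>a\<in>UNIV. pol 1 s a else 0)" for s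
    by simp
  then have "occ_expect Q pol s0 (Suc 0) (\<lambda>_ _. 1) = (\<Sum>a\<in>UNIV. pol 1 s0 a)"
    by (simp add: occ_expect_def)
  then show ?case using assms(2) 0 by (simp add: stoch_policy_def)
next
  case (Suc m)
  have "(\<Sum>s\<in>UNIV. Q (Suc m) s' a' s * (\<Sum>a\<in>UNIV. pol (Suc (Suc m)) s a * 1)) = 1" for s' a'
    using assms(1,2) Suc.prems by (simp add: stoch_kernel_def stoch_policy_def)
  with Suc show ?case by (simp add: occ_expect_Suc_Suc)
qed

lemma occ_expect_abs_le:
  assumes "stoch_kernel H Q" and "stoch_policy H pol" and "Suc m \<le> H"
    and "\<And>s a. \<bar>f s a\<bar> \<le> c"
  shows "\<bar>occ_expect Q pol s0 (Suc m) f\<bar> \<le> c"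
proof -
  have "\<bar>occ_expect Q pol s0 (Suc m) f\<bar>
      \<le> (\<Sum>s\<in>UNIV. \<Sum>a\<in>UNIV. \<bar>occ Q pol s0 (Suc m) s a * f s a\<bar>)"
    unfolding occ_expect_def by (rule order_trans[OF sum_abs]) (intro sum_mono sum_abs)
  also have "\<dots> \<le> (\<Sum>s\<in>UNIV. \<Sum>a\<in>UNIV. occ Q pol s0 (Suc m) s a * c)"
    using occ_nonneg[OF assms(1-3)] assms(4) by (intro sum_mono) (simp add: abs_mult mult_left_mono)
  also have "\<dots> = c * occ_expect Q pol s0 (Suc m) (\<lambda>_ _. 1)"
    by (simp add: occ_expect_def sum_distrib_left sum_distrib_right mult.commute)
  finally show ?thesis using occ_expect_one[OF assms(1-3)] by simp
qed

lemma occ_expect_diff_le: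
  fixes Q1 Q2 :: "nat \<Rightarrow> 's::finite \<Rightarrow> 'a::finite \<Rightarrow> 's \<Rightarrow> real"
  assumes "stoch_kernel H Q1" and "stoch_kernel H Q2" and "stoch_policy H pol"
    and close: "\<And>h s a g. h \<in> {1..H} \<Longrightarrow> (\<And>x. 0 \<le> g x \<and> g x \<le> 1) \<Longrightarrow>
              \<bar>\<Sum>x\<in>UNIV. (Q1 h s a x - Q2 h s a x) * g x\<bar> \<le> eps"
    and "Suc m \<le> H" and "\<And>s a. 0 \<le> f s a \<and> f s a \<le> 1"
  shows "\<bar>occ_expect Q1 pol s0 (Suc m) f - occ_expect Q2 pol s0 (Suc m) f\<bar> \<le> eps * real m"
  using assms(5,6)
proof (induction m arbitrary: f)
  case 0
  then show ?case by (simp add: occ_expect_def)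
next
  case (Suc m)
  define g where "g s = (\<Sum>a\<in>UNIV. pol (Suc (Suc m)) s a * f s a)" for s
  define G1 where "G1 = (\<lambda>s' a'. \<Sum>s\<in>UNIV. Q1 (Suc m) s' a' s * g s)"
  define G2 where "G2 = (\<lambda>s' a'. \<Sum>s\<in>UNIV. Q2 (Suc m) s' a' s * g s)"
  have g01: "0 \<le> g s \<and> g s \<le> 1" for s
    unfolding g_def using assms(3) Suc.prems
    by (intro sum_weighted_unit_interval) (auto simp: stoch_policy_def)
  have G01: "0 \<le> G1 s' a' \<and> G1 s' a' \<le> 1" for s' a'
    unfolding G1_def using assms(1) Suc.prems g01
    by (intro sum_weighted_unit_interval) (auto simp: stoch_kernel_def)
  have "\<bar>G1 s' a' - G2 s' a'\<bar> \<le> eps" for s' a'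
    unfolding G1_def G2_def using close[of "Suc m" g s' a'] Suc.prems g01
    by (simp add: sum_subtractf left_diff_distrib)
  then have "\<bar>occ_expect Q2 pol s0 (Suc m) (\<lambda>s a. G1 s a - G2 s a)\<bar> \<le> eps"
    using assms(2,3) Suc.prems by (intro occ_expect_abs_le) auto
  moreover have "\<bar>occ_expect Q1 pol s0 (Suc m) G1 - occ_expect Q2 pol s0 (Suc m) G1\<bar> \<le> eps * real m"
    using Suc.IH G01 Suc.prems by simp
  moreover have "occ_expect Q1 pol s0 (Suc (Suc m)) f - occ_expect Q2 pol s0 (Suc (Suc m)) f
      = (occ_expect Q1 pol s0 (Suc m) G1 - occ_expect Q2 pol s0 (Suc m) G1)
        + occ_expect Q2 pol s0 (Suc m) (\<lambda>s a. G1 s a - G2 s a)"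
    unfolding occ_expect_diff[symmetric] by (simp add: occ_expect_Suc_Suc G1_def G2_def g_def)
  ultimately show ?case by (simp add: algebra_simps)
qed

theorem lemma11:
  fixes M H :: nat
    and P :: "nat \<Rightarrow> nat \<Rightarrow> 's::finite \<Rightarrow> 'a::finite \<Rightarrow> 's \<Rightarrow> real"
    and Pc :: "nat \<Rightarrow> 's \<Rightarrow> 'a \<Rightarrow> 's \<Rightarrow> real"
    and Pind :: "nat \<Rightarrow> nat \<Rightarrow> 's \<Rightarrow> 'a \<Rightarrow> 's \<Rightarrow> real"
    and eps :: real
    and pol :: "nat \<Rightarrow> 's \<Rightarrow> 'a \<Rightarrow> real"
    and s0 s :: 's and a :: 'a and h i j :: nat
  assumes "0 \<le> eps" and "eps < 1"
    and "stoch_kernel H Pc"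
    and "\<forall>k\<in>{1..M}. stoch_kernel H (Pind k)"
    and "\<forall>k\<in>{1..M}. \<forall>h'\<in>{1..H}. \<forall>s a s'.
           P k h' s a s' = (1 - eps) * Pc h' s a s' + eps * Pind k h' s a s'"
    and "stoch_policy H pol"
    and "h \<in> {1..H}" and "i \<in> {1..M}" and "j \<in> {1..M}"
  shows "\<bar>occ (P i) pol s0 h s a - occ (P j) pol s0 h s a\<bar> \<le> eps * real H"
proof -
  obtain m where h: "h = Suc m" and mH: "Suc m \<le> H" using assms(7) by (cases h) auto
  have kernel: "stoch_kernel H (P k)" if "k \<in> {1..M}" for k
  proof (rule stoch_kernel_mixture[OF assms(1) _ assms(3)])
    show "eps \<le> 1" using assms(2) by simp
    show "stoch_kernel H (Pind k)" using assms(4) that by blast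
    show "P k h' s' a' s'' = (1 - eps) * Pc h' s' a' s'' + eps * Pind k h' s' a' s''"
      if "h' \<in> {1..H}" for h' s' a' s''
      using assms(5) \<open>k \<in> {1..M}\<close> that by blast
  qed
  have close: "\<bar>\<Sum>x\<in>UNIV. (P i h' s' a' x - P j h' s' a' x) * g x\<bar> \<le> eps"
    if "h' \<in> {1..H}" and "\<And>x. 0 \<le> g x \<and> g x \<le> 1" for h' s' a' g
  proof -
    have "stoch_kernel H (Pind i)" and "stoch_kernel H (Pind j)"
      using assms(4,8,9) by auto
    then show ?thesis
      using mixture_test_diff_le[of eps "Pind i h' s' a'" "Pind j h' s' a'" g "Pc h' s' a'"]
        assms(1,5,8,9) that by (simp add: stoch_kernel_def)
  qed
  let ?ind = "\<lambda>x y. if x = s \<and> y = a then 1 else 0"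
  have "\<bar>occ_expect (P i) pol s0 h ?ind - occ_expect (P j) pol s0 h ?ind\<bar> \<le> eps * real m"
    unfolding h by (rule occ_expect_diff_le[OF kernel[OF assms(8)] kernel[OF assms(9)] assms(6) close mH]) auto
  also have "\<dots> \<le> eps * real H"
    using mH assms(1) by (intro mult_left_mono) auto
  finally show ?thesis by (simp add: occ_expect_indicator)
qed

end
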